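(* With $R^+_K(P)$ and $R^-_K(P)$ as defined in the context, $$\lim_{P\to\infty}R^+_K(P)=E\left[\left\{\log\frac{|H_{\max}|^2}{|H_e|^2}\right\}^+\right],\qquad \lim_{P\to\infty}R^-_K(P)=\max_{T\ge0}\Pr(|H_{\max}|^2\ge T)\,E\left[\log\frac{|H_{\max}|^2}{|H_e|^2}\ \Big|\ |H_{\max}|^2\ge T\right].$$
   Context: $\{v\}^+=\max\{0,v\}$. $H_1,\dots,H_K,H_e$ are independent with $H_i\sim\mathcal{CN}(0,\mu_i)$ (the fading gains of $K$ intended receivers and an eavesdropper in the fast-fading channel $y_i(t)=h_i(t)x(t)+z_i(t)$ with unit-variance complex Gaussian noise), and $|H_{\max}|^2=\max_{1\le i\le K}|H_i|^2$. For $P>0$, with $P(\cdot)$ ranging over nonnegative functions of $H_{\max}$ with $E[P(H_{\max})]\le P$: $R^+_K(P)=\max_{P(\cdot)}E[\{\log(1+|H_{\max}|^2P(H_{\max}))-\log(1+|H_e|^2P(H_{\max}))\}^+]$ and $R^-_K(P)=\max_{P(\cdot)}E[\log(1+|H_{\max}|^2P(H_{\max}))-\log(1+|H_e|^2P(H_{\max}))]$. *)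

theory Defs
  imports "HOL-Probability.Probability"
begin

definition cn_density :: "real \<Rightarrow> complex \<Rightarrow> real" where
  "cn_density mu z = exp (- (cmod z)\<^sup>2 / mu) / (pi * mu)"

definition Gmax :: "nat \<Rightarrow> (nat \<Rightarrow> 'a \<Rightarrow> complex) \<Rightarrow> 'a \<Rightarrow> real" where
  "Gmax K H w = Max ((\<lambda>i. (cmod (H i w))\<^sup>2) ` {..<K})"

definition admissible_power ::
  "'a measure \<Rightarrow> nat \<Rightarrow> (nat \<Rightarrow> 'a \<Rightarrow> complex) \<Rightarrow> real \<Rightarrow> (real \<Rightarrow> real) set" where
  "admissible_power M K H P =
     {p. p \<in> borel_measurable borel \<and> (\<forall>g. 0 \<le> p g) \<and>
         integrable M (\<lambda>w. p (Gmax K H w)) \<and> (\<integral>w. p (Gmax K H w) \<partial>M) \<le> P}"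

definition R_plus ::
  "'a measure \<Rightarrow> nat \<Rightarrow> (nat \<Rightarrow> 'a \<Rightarrow> complex) \<Rightarrow> ('a \<Rightarrow> complex) \<Rightarrow> real \<Rightarrow> real" where
  "R_plus M K H He P = (SUP p \<in> admissible_power M K H P.
      \<integral>w. max 0 (ln (1 + Gmax K H w * p (Gmax K H w))
                   - ln (1 + (cmod (He w))\<^sup>2 * p (Gmax K H w))) \<partial>M)"

definition R_minus ::
  "'a measure \<Rightarrow> nat \<Rightarrow> (nat \<Rightarrow> 'a \<Rightarrow> complex) \<Rightarrow> ('a \<Rightarrow> complex) \<Rightarrow> real \<Rightarrow> real" where
  "R_minus M K H He P = (SUP p \<in> admissible_power M K H P.
      \<integral>w. (ln (1 + Gmax K H w * p (Gmax K H w))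
             - ln (1 + (cmod (He w))\<^sup>2 * p (Gmax K H w))) \<partial>M)"

definition cond_exp_event :: "'a measure \<Rightarrow> ('a \<Rightarrow> real) \<Rightarrow> 'a set \<Rightarrow> real" where
  "cond_exp_event M X A = (\<integral>w. indicator A w * X w \<partial>M) / measure M A"

end

theory Submission
  imports Defs
begin

(* For fixed gains g, e > 0 and power p >= 0 the difference
   ln (1 + g p) - ln (1 + e p) lies between 0 and ln g - ln e and tends to ln g - ln e
   as p grows. Since ln |H|^2 is integrable for complex Gaussian H, dominated convergence
   gives both limits along suitable policies: constant power for R^+, and for R^- full power
   on the event {|H_max|^2 >= exp m}, where m = E[ln |H_e|^2]. For the matching upper bound
   on R^-, the tangent of the convex function t |-> ln (1 + e^t q) at t = m bounds
   ln (1 + |H_e|^2 q) from below; the error term is (ln |H_e|^2 - m) times a bounded function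
   of H_max, which has mean zero by independence. So lim R^- = E[(ln |H_max|^2 - m)^+],
   and this is the supremum over thresholds T of E[1{|H_max|^2 >= T} ln (|H_max|^2 / |H_e|^2)],
   attained at T = exp m. *)

section \<open>Elementary estimates for ln (1 + a p)\<close>

lemma ln_one_plus_mult_diff_bounds:
  fixes a b p :: real
  assumes "0 < b" "b \<le> a" "0 \<le> p"
  shows "0 \<le> ln (1 + a * p) - ln (1 + b * p)"
    and "ln (1 + a * p) - ln (1 + b * p) \<le> ln a - ln b"
proof -
  have pos: "0 < 1 + b * p" "0 < 1 + a * p" using assms by (auto intro!: add_pos_nonneg)
  have "1 + b * p \<le> 1 + a * p" using assms by (simp add: mult_right_mono)
  then show "0 \<le> ln (1 + a * p) - ln (1 + b * p)" using pos by simp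
  have "(1 + a * p) * b \<le> (1 + b * p) * a" using assms by (simp add: algebra_simps)
  then have "(1 + a * p) / (1 + b * p) \<le> a / b" using assms pos by (simp add: field_simps)
  then have "ln ((1 + a * p) / (1 + b * p)) \<le> ln (a / b)"
    using assms pos by (subst ln_le_cancel_iff) auto
  then show "ln (1 + a * p) - ln (1 + b * p) \<le> ln a - ln b"
    using assms pos by (simp add: ln_div)
qed

lemma abs_ln_one_plus_mult_diff_le:
  fixes a b p :: real
  assumes "0 < a" "0 < b" "0 \<le> p"
  shows "\<bar>ln (1 + a * p) - ln (1 + b * p)\<bar> \<le> \<bar>ln a - ln b\<bar>"
  using ln_one_plus_mult_diff_bounds[of b a p] ln_one_plus_mult_diff_bounds[of a b p] assms
  by (cases "b \<le> a") auto

lemma ln_one_plus_mult_diff_le_max: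
  fixes a b p :: real
  assumes "0 < a" "0 < b" "0 \<le> p"
  shows "ln (1 + a * p) - ln (1 + b * p) \<le> max 0 (ln a - ln b)"
  using ln_one_plus_mult_diff_bounds[of b a p] ln_one_plus_mult_diff_bounds[of a b p] assms
  by (cases "b \<le> a") auto

lemma tendsto_ln_one_plus_mult_diff:
  fixes a b :: real
  assumes "0 < a" "0 < b"
  shows "((\<lambda>P. ln (1 + a * P) - ln (1 + b * P)) \<longlongrightarrow> ln a - ln b) at_top"
proof -
  have "((\<lambda>P. ln (a + inverse P) - ln (b + inverse P)) \<longlongrightarrow> ln (a + 0) - ln (b + 0)) at_top"
    using assms by (intro tendsto_intros tendsto_inverse_0_at_top filterlim_ident) auto
  moreover have "\<forall>\<^sub>F P in at_top.
      ln (a + inverse P) - ln (b + inverse P) = ln (1 + a * P) - ln (1 + b * P)"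
    using eventually_gt_at_top[of 0]
  proof eventually_elim
    case (elim P)
    have "1 + a * P = P * (a + inverse P)" "1 + b * P = P * (b + inverse P)"
      using elim by (auto simp: field_simps)
    moreover have "0 < a + inverse P" "0 < b + inverse P"
      using elim assms by (auto intro!: add_pos_pos)
    ultimately show ?case using elim by (simp add: ln_mult)
  qed
  ultimately show ?thesis by (simp add: tendsto_cong)
qed

lemma ln_one_plus_exp_mult_tangent:
  fixes p t m :: real
  assumes "0 \<le> p"
  shows "ln (1 + exp m * p) + exp m * p / (1 + exp m * p) * (t - m) \<le> ln (1 + exp t * p)"
proof -
  define A where "A = exp m * p"
  define q where "q = A / (1 + A)"
  have A: "0 \<le> A" using assms by (simp add: A_def)
  have q: "0 \<le> q" "q \<le> 1" using A by (auto simp: q_def)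
  have "exp ((1 - q) *\<^sub>R 0 + q *\<^sub>R (t - m)) \<le> (1 - q) * exp 0 + q * exp (t - m)"
    using q by (intro convex_onD[OF exp_convex]) auto
  also have "\<dots> = (1 + exp t * p) / (1 + A)"
    using A by (simp add: q_def A_def exp_diff field_simps)
  finally have "q * (t - m) \<le> ln ((1 + exp t * p) / (1 + A))"
    using A assms by (subst ln_ge_iff) (auto intro!: divide_pos_pos add_pos_nonneg)
  also have "\<dots> = ln (1 + exp t * p) - ln (1 + A)"
    using A assms by (intro ln_divide_pos) (auto intro!: add_pos_nonneg)
  finally show ?thesis by (simp add: q_def A_def)
qed

lemma ln_one_plus_mult_diff_le_tangent:
  fixes a b q m :: real
  assumes "0 < a" "0 < b" "0 \<le> q"
  shows "ln (1 + a * q) - ln (1 + b * q)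
    \<le> max 0 (ln a - m) - exp m * q / (1 + exp m * q) * (ln b - m)"
  using ln_one_plus_exp_mult_tangent[OF assms(3), of m "ln b"]
    ln_one_plus_mult_diff_le_max[of a "exp m" q] assms
  by simp

section \<open>Logarithmic moments of complex Gaussian variables\<close>

lemma integrable_exp_neg_square_mult_one_plus_square:
  fixes mu :: real
  assumes "0 < mu"
  shows "integrable lborel (\<lambda>x. exp (- x\<^sup>2 / mu) * (1 + x\<^sup>2))"
proof -
  define \<sigma> where "\<sigma> = sqrt (mu / 2)"
  have \<sigma>: "0 < \<sigma>" "\<sigma>\<^sup>2 = mu / 2" using assms by (simp_all add: \<sigma>_def)
  have "exp (- x\<^sup>2 / mu) * (1 + x\<^sup>2) = sqrt (pi * mu) *
      (normal_density 0 \<sigma> x * (x - 0) ^ 0 + normal_density 0 \<sigma> x * (x - 0) ^ 2)" for x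
  proof -
    have "sqrt (2 * pi * (mu / 2)) = sqrt (pi * mu)" by (simp add: mult.commute)
    then show ?thesis using assms \<sigma> by (simp add: normal_density_def field_simps)
  qed
  moreover have "integrable lborel (\<lambda>x. sqrt (pi * mu) *
      (normal_density 0 \<sigma> x * (x - 0) ^ 0 + normal_density 0 \<sigma> x * (x - 0) ^ 2))"
    using \<sigma>
    by (intro integrable_mult_right Bochner_Integration.integrable_add integrable_normal_moment)
  ultimately show ?thesis by simp
qed

lemma integrable_indicator_abs_powr_neg_half:
  "integrable lborel (\<lambda>x::real. indicator {-1..1} x * \<bar>x\<bar> powr (-1/2))"
proof -
  have "((\<lambda>x::real. \<bar>x\<bar> powr (-1/2)) has_integral 2) {0..1}"
    using has_integral_powr_from_0[of "-1/2" 1] by (subst has_integral_cong) auto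
  moreover from this have "((\<lambda>x::real. \<bar>x\<bar> powr (-1/2)) has_integral 2) {-1..0}"
    using has_integral_reflect_real[of "\<lambda>x::real. \<bar>x\<bar> powr (-1/2)" 2 1 0] by simp
  ultimately have "((\<lambda>x::real. \<bar>x\<bar> powr (-1/2)) has_integral 2 + 2) {-1..1}"
    by (intro has_integral_combine) auto
  moreover have "(\<lambda>x::real. indicator {-1..1} x * \<bar>x\<bar> powr (-1/2)) =
      (\<lambda>x. if x \<in> {-1..1} then \<bar>x\<bar> powr (-1/2) else 0)"
    by (auto simp: indicator_def)
  ultimately have "((\<lambda>x::real. indicator {-1..1} x * \<bar>x\<bar> powr (-1/2)) has_integral 4) UNIV"
    by (simp only: has_integral_restrict_UNIV) simp
  then have "(\<integral>\<^sup>+x. ennreal (indicator {-1..1} x * \<bar>x\<bar> powr (-1/2)) \<partial>lborel) = ennreal 4"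
    by (intro nn_integral_has_integral_lborel) auto
  then show ?thesis
    by (intro integrableI_nonneg) auto
qed

lemma integrable_exp_neg_square_mult_abs_powr_neg_half:
  fixes mu :: real
  assumes "0 < mu"
  shows "integrable lborel (\<lambda>x. exp (- x\<^sup>2 / mu) * \<bar>x\<bar> powr (-1/2))"
proof (rule Bochner_Integration.integrable_bound)
  show "integrable lborel
      (\<lambda>x. indicator {-1..1} x * \<bar>x\<bar> powr (-1/2) + exp (- x\<^sup>2 / mu) * (1 + x\<^sup>2))"
    using integrable_indicator_abs_powr_neg_half
      integrable_exp_neg_square_mult_one_plus_square[OF assms]
    by (rule Bochner_Integration.integrable_add)
  show "AE x in lborel. norm (exp (- x\<^sup>2 / mu) * \<bar>x\<bar> powr (-1/2))
      \<le> norm (indicator {-1..1} x * \<bar>x\<bar> powr (-1/2) + exp (- x\<^sup>2 / mu) * (1 + x\<^sup>2))"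
  proof (rule AE_I2)
    fix x :: real
    have "exp (- x\<^sup>2 / mu) * \<bar>x\<bar> powr (-1/2) \<le> \<bar>x\<bar> powr (-1/2)" if "\<bar>x\<bar> \<le> 1"
      using assms by (intro mult_left_le_one_le) auto
    moreover have "\<bar>x\<bar> powr (-1/2) \<le> 1 + x\<^sup>2" if "1 < \<bar>x\<bar>"
      using that powr_mono2'[of "-1/2" 1 "\<bar>x\<bar>"] by (simp add: add_increasing2)
    ultimately show "norm (exp (- x\<^sup>2 / mu) * \<bar>x\<bar> powr (-1/2))
        \<le> norm (indicator {-1..1} x * \<bar>x\<bar> powr (-1/2) + exp (- x\<^sup>2 / mu) * (1 + x\<^sup>2))"
      by (cases "\<bar>x\<bar> \<le> 1") (auto simp: indicator_def abs_le_iff add_increasing2)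
  qed
qed measurable

lemma integrable_complex_Re_Im_mult:
  fixes f g :: "real \<Rightarrow> real"
  assumes f: "integrable lborel f" and g: "integrable lborel g"
  shows "integrable (lborel :: complex measure) (\<lambda>z. f (Re z) * g (Im z))"
proof (rule integrableI_bounded)
  have [measurable]: "f \<in> borel_measurable borel" "g \<in> borel_measurable borel"
    using f g by auto
  show "(\<lambda>z. f (Re z) * g (Im z)) \<in> borel_measurable lborel" by measurable
  define F where "F b x = ennreal (if b = 1 then \<bar>f x\<bar> else \<bar>g x\<bar>)" for b :: complex and x
  have "(\<integral>\<^sup>+z. norm (f (Re z) * g (Im z)) \<partial>lborel) = (\<integral>\<^sup>+z. (\<Prod>b\<in>Basis. F b (z \<bullet> b)) \<partial>lborel)"
    by (simp add: Basis_complex_def F_def inner_complex_def abs_mult ennreal_mult)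
  also have "\<dots> = (\<Prod>b\<in>Basis. \<integral>\<^sup>+x. F b x \<partial>lborel)"
    by (rule nn_integral_lborel_prod) (auto simp: F_def)
  also have "\<dots> = (\<integral>\<^sup>+x. norm (f x) \<partial>lborel) * (\<integral>\<^sup>+x. norm (g x) \<partial>lborel)"
    by (simp add: Basis_complex_def F_def)
  also have "\<dots> < \<infinity>"
    using f g by (simp add: integrable_iff_bounded ennreal_mult_less_top)
  finally show "(\<integral>\<^sup>+z. norm (f (Re z) * g (Im z)) \<partial>lborel) < \<infinity>" .
qed

lemma AE_lborel_complex_Re_Im_nonzero:
  "AE z in (lborel :: complex measure). Re z \<noteq> 0 \<and> Im z \<noteq> 0"
proof -
  have "negligible {z::complex. 1 \<bullet> z = 0}" "negligible {z::complex. \<i> \<bullet> z = 0}"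
    by (intro negligible_hyperplane; simp)+
  then have "negligible ({z. Re z = 0} \<union> {z. Im z = 0})"
    by (simp add: inner_complex_def)
  moreover have "{z. Re z = 0} \<union> {z. Im z = 0} \<in> sets (lborel :: complex measure)"
    by measurable
  ultimately have "{z. Re z = 0} \<union> {z. Im z = 0} \<in> null_sets lborel"
    by (simp add: negligible_iff_null_sets null_sets_completion_iff)
  then show ?thesis
    by (rule AE_I') auto
qed

lemma abs_ln_le_plus_two_div_sqrt:
  fixes t :: real
  assumes "0 < t"
  shows "\<bar>ln t\<bar> \<le> t + 2 / sqrt t"
proof (cases "1 \<le> t")
  case True
  have "0 \<le> 2 / sqrt t" using assms by simp
  then have "ln t \<le> t + 2 / sqrt t" using ln_le_minus_one[OF assms] by linarith
  then show ?thesis using True by simp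
next
  case False
  have "ln (1 / sqrt t) \<le> 1 / sqrt t - 1" using assms by (intro ln_le_minus_one) simp
  moreover have "ln (1 / sqrt t) = - ln t / 2" using assms by (simp add: ln_div ln_sqrt)
  ultimately show ?thesis using False assms by simp
qed

(* The bound splits into products of functions of Re z and Im z that are integrable against
   a Gaussian weight; the factors |x| powr (-1/2) absorb the logarithmic singularity at 0. *)
lemma abs_ln_cmod_square_le:
  fixes z :: complex
  assumes x: "Re z \<noteq> 0" and y: "Im z \<noteq> 0"
  shows "\<bar>ln ((cmod z)\<^sup>2)\<bar>
    \<le> (1 + (Re z)\<^sup>2) * (1 + (Im z)\<^sup>2) + 2 * (\<bar>Re z\<bar> powr (-1/2) * \<bar>Im z\<bar> powr (-1/2))"
proof -
  define t where "t = (cmod z)\<^sup>2"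
  have t: "t = (Re z)\<^sup>2 + (Im z)\<^sup>2" "0 < t"
    using x by (auto simp: t_def cmod_power2 add_pos_nonneg)
  have "2 * (\<bar>Re z\<bar> * \<bar>Im z\<bar>) \<le> t"
    using t(1) sum_squares_bound[of "\<bar>Re z\<bar>" "\<bar>Im z\<bar>"] by simp
  moreover have "0 \<le> \<bar>Re z\<bar> * \<bar>Im z\<bar>" by simp
  ultimately have "\<bar>Re z\<bar> * \<bar>Im z\<bar> \<le> t" by linarith
  then have "1 / sqrt t \<le> 1 / sqrt (\<bar>Re z\<bar> * \<bar>Im z\<bar>)"
    using x y t(2) by (intro divide_left_mono) auto
  also have "\<dots> = \<bar>Re z\<bar> powr (-1/2) * \<bar>Im z\<bar> powr (-1/2)"
    using x y by (simp add: powr_minus_divide powr_half_sqrt real_sqrt_mult)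
  finally have "1 / sqrt t \<le> \<bar>Re z\<bar> powr (-1/2) * \<bar>Im z\<bar> powr (-1/2)" .
  moreover have "t \<le> (1 + (Re z)\<^sup>2) * (1 + (Im z)\<^sup>2)"
    using t(1) by (simp add: algebra_simps)
  ultimately show ?thesis
    using abs_ln_le_plus_two_div_sqrt[OF t(2)] by (simp add: t_def)
qed

lemma cn_density_Re_Im:
  "cn_density mu z = exp (- (Re z)\<^sup>2 / mu) * exp (- (Im z)\<^sup>2 / mu) / (pi * mu)"
  by (simp add: cn_density_def cmod_power2 exp_add[symmetric] diff_divide_distrib)

lemma integrable_cn_density_mult_ln_cmod_square:
  fixes mu :: real
  assumes "0 < mu"
  shows "integrable lborel (\<lambda>z. cn_density mu z * ln ((cmod z)\<^sup>2))"
proof -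
  define a where "a x = exp (- x\<^sup>2 / mu) * (1 + x\<^sup>2)" for x :: real
  define b where "b x = exp (- x\<^sup>2 / mu) * \<bar>x\<bar> powr (-1/2)" for x :: real
  have "integrable lborel (\<lambda>z. (a (Re z) * a (Im z) + 2 * (b (Re z) * b (Im z))) / (pi * mu))"
    unfolding a_def b_def
    using assms integrable_exp_neg_square_mult_one_plus_square
      integrable_exp_neg_square_mult_abs_powr_neg_half
    by (intro integrable_divide Bochner_Integration.integrable_add integrable_mult_right
        integrable_complex_Re_Im_mult) auto
  then show ?thesis
  proof (rule Bochner_Integration.integrable_bound)
    show "AE z in lborel. norm (cn_density mu z * ln ((cmod z)\<^sup>2))
        \<le> norm ((a (Re z) * a (Im z) + 2 * (b (Re z) * b (Im z))) / (pi * mu))"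
      using AE_lborel_complex_Re_Im_nonzero
    proof eventually_elim
      case (elim z)
      have "cn_density mu z * \<bar>ln ((cmod z)\<^sup>2)\<bar> \<le> cn_density mu z *
          ((1 + (Re z)\<^sup>2) * (1 + (Im z)\<^sup>2) + 2 * (\<bar>Re z\<bar> powr (-1/2) * \<bar>Im z\<bar> powr (-1/2)))"
        using elim assms abs_ln_cmod_square_le[of z]
        by (intro mult_left_mono) (auto simp: cn_density_def)
      also have "\<dots> = (a (Re z) * a (Im z) + 2 * (b (Re z) * b (Im z))) / (pi * mu)"
        by (simp add: cn_density_Re_Im a_def b_def field_simps)
      finally show ?case
        using assms by (simp add: abs_mult cn_density_def a_def b_def)
    qed
  qed (simp add: cn_density_def)
qed

lemma
  assumes "0 < mu" and X: "distributed M lborel X (\<lambda>z. ennreal (cn_density mu z))"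
  shows cn_distributed_integrable_ln_cmod_square: "integrable M (\<lambda>w. ln ((cmod (X w))\<^sup>2))"
    and cn_distributed_AE_nonzero: "AE w in M. X w \<noteq> 0"
proof -
  have density_nonneg: "0 \<le> cn_density mu z" for z
    using assms by (simp add: cn_density_def)
  show "integrable M (\<lambda>w. ln ((cmod (X w))\<^sup>2))"
    using distributed_integrable[OF X, of "\<lambda>z. ln ((cmod z)\<^sup>2)"] density_nonneg
      integrable_cn_density_mult_ln_cmod_square[OF assms(1)]
    by simp
  have "AE z in density lborel (\<lambda>z. ennreal (cn_density mu z)). z \<noteq> 0"
    using AE_lborel_singleton[of 0] by (subst AE_density) (auto simp: cn_density_def)
  then show "AE w in M. X w \<noteq> 0"
    unfolding distributed_distr_eq_density[OF X, symmetric]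
    by (rule AE_distrD[OF distributed_measurable[OF X]])
qed

section \<open>High-power limits for independent fading gains\<close>

lemma tendsto_SUP_squeeze:
  fixes f :: "'p \<Rightarrow> real"
  assumes witness: "\<forall>\<^sub>F P in F. q P \<in> S P"
    and upper: "\<And>P p. p \<in> S P \<Longrightarrow> f p \<le> L"
    and lim: "((\<lambda>P. f (q P)) \<longlongrightarrow> L) F"
  shows "((\<lambda>P. SUP p \<in> S P. f p) \<longlongrightarrow> L) F"
proof (rule tendsto_sandwich[OF _ _ lim tendsto_const])
  show "\<forall>\<^sub>F P in F. f (q P) \<le> (SUP p \<in> S P. f p)"
    using witness by eventually_elim (auto intro!: cSUP_upper bdd_aboveI2 upper)
  show "\<forall>\<^sub>F P in F. (SUP p \<in> S P. f p) \<le> L"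
    using witness by eventually_elim (auto intro!: cSUP_least upper)
qed

lemma (in prob_space) indep_var_integral_bounded_mult:
  fixes X Y :: "'a \<Rightarrow> real"
  assumes indep: "indep_var borel Y borel X" and X: "integrable M X"
    and \<phi>: "\<phi> \<in> borel_measurable borel" and bound: "\<And>y. \<bar>\<phi> y\<bar> \<le> B"
  shows "integrable M (\<lambda>w. \<phi> (Y w) * X w)"
    and "(\<integral>w. \<phi> (Y w) * X w \<partial>M) = expectation (\<lambda>w. \<phi> (Y w)) * expectation X"
proof -
  have indep': "indep_var borel (\<lambda>w. \<phi> (Y w)) borel X"
    using indep_var_compose[OF indep, of \<phi> borel "\<lambda>x. x" borel] \<phi> by (simp add: comp_def)
  have "integrable M (\<lambda>w. \<phi> (Y w))"
    using indep_var_rv1[OF indep] \<phi> bound by (intro integrable_const_bound[where B=B]) auto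
  then show "integrable M (\<lambda>w. \<phi> (Y w) * X w)"
    and "(\<integral>w. \<phi> (Y w) * X w \<partial>M) = expectation (\<lambda>w. \<phi> (Y w)) * expectation X"
    using indep_var_integrable[OF indep' _ X] indep_var_lebesgue_integral[OF indep' _ X] by auto
qed

(* For a null set A both sides vanish, the left one because cond_exp_event divides by 0. *)
lemma (in finite_measure) measure_mult_cond_exp_event:
  assumes "A \<in> sets M"
  shows "measure M A * cond_exp_event M X A = (\<integral>w. indicator A w * X w \<partial>M)"
proof (cases "measure M A = 0")
  case True
  then have "AE w in M. w \<notin> A"
    using assms by (intro AE_I'[of A]) (auto simp: null_sets_def emeasure_eq_measure)
  then have "(\<integral>w. indicator A w * X w \<partial>M) = 0"
    by (intro integral_eq_zero_AE) (auto elim!: eventually_mono)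
  with True show ?thesis by simp
qed (simp add: cond_exp_event_def)

(* G and E stand for the gains |H_max|^2 and |H_e|^2. *)
locale fading_gains = prob_space M for M :: "'a measure" +
  fixes G E :: "'a \<Rightarrow> real"
  assumes measurable_G[measurable]: "G \<in> borel_measurable M"
    and measurable_E[measurable]: "E \<in> borel_measurable M"
    and AE_gains_pos: "AE w in M. 0 < G w \<and> 0 < E w"
    and integrable_ln_G: "integrable M (\<lambda>w. ln (G w))"
    and integrable_ln_E: "integrable M (\<lambda>w. ln (E w))"
    and indep_gains: "indep_var borel G borel E"
begin

definition power_allocations :: "real \<Rightarrow> (real \<Rightarrow> real) set" where
  "power_allocations P = {p. p \<in> borel_measurable borel \<and> (\<forall>g. 0 \<le> p g) \<and>
     integrable M (\<lambda>w. p (G w)) \<and> (\<integral>w. p (G w) \<partial>M) \<le> P}"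

definition mean_ln_E :: real where
  "mean_ln_E = expectation (\<lambda>w. ln (E w))"

lemma power_allocations_nonneg: "p \<in> power_allocations P \<Longrightarrow> 0 \<le> p g"
  by (simp add: power_allocations_def)

lemma bounded_in_power_allocations:
  assumes "p \<in> borel_measurable borel" "\<And>g. 0 \<le> p g" "\<And>g. p g \<le> P"
  shows "p \<in> power_allocations P"
proof -
  have "integrable M (\<lambda>w. p (G w))"
    using assms by (intro integrable_const_bound[where B=P]) auto
  moreover have "(\<integral>w. p (G w) \<partial>M) \<le> (\<integral>w. P \<partial>M)"
    using assms calculation by (intro integral_mono) auto
  ultimately show ?thesis
    using assms by (simp add: power_allocations_def prob_space)
qed

lemma AE_ln_div_eq: "AE w in M. ln (G w / E w) = ln (G w) - ln (E w)"
  using AE_gains_pos by eventually_elim (simp add: ln_div)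

lemma integrable_ln_diff: "integrable M (\<lambda>w. ln (G w) - ln (E w))"
  using integrable_ln_G integrable_ln_E by (rule Bochner_Integration.integrable_diff)

lemma integrable_positive_part_ln_div: "integrable M (\<lambda>w. max 0 (ln (G w / E w)))"
  using integrable_ln_diff
  by (rule Bochner_Integration.integrable_bound) (use AE_ln_div_eq in \<open>auto elim!: eventually_mono\<close>)

lemma positive_part_rate_le:
  assumes "p \<in> power_allocations P"
  shows "(\<integral>w. max 0 (ln (1 + G w * p (G w)) - ln (1 + E w * p (G w))) \<partial>M)
    \<le> (\<integral>w. max 0 (ln (G w / E w)) \<partial>M)"
  using integrable_positive_part_ln_div
proof (rule integral_mono_AE')
  show "AE w in M. max 0 (ln (1 + G w * p (G w)) - ln (1 + E w * p (G w)))
      \<le> max 0 (ln (G w / E w))"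
    using AE_gains_pos AE_ln_div_eq
    by eventually_elim
      (use ln_one_plus_mult_diff_le_max power_allocations_nonneg[OF assms] in fastforce)
qed auto

lemma tendsto_constant_power_positive_part_rate:
  "((\<lambda>P. \<integral>w. max 0 (ln (1 + G w * P) - ln (1 + E w * P)) \<partial>M)
    \<longlongrightarrow> (\<integral>w. max 0 (ln (G w / E w)) \<partial>M)) at_top"
proof (rule integral_dominated_convergence_at_top[where w="\<lambda>w. \<bar>ln (G w) - ln (E w)\<bar>"])
  show "AE w in M. ((\<lambda>P. max 0 (ln (1 + G w * P) - ln (1 + E w * P)))
      \<longlongrightarrow> max 0 (ln (G w / E w))) at_top"
    using AE_gains_pos AE_ln_div_eq
    by eventually_elim (auto intro!: tendsto_max tendsto_ln_one_plus_mult_diff)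
  show "\<forall>\<^sub>F P in at_top. AE w in M.
      norm (max 0 (ln (1 + G w * P) - ln (1 + E w * P))) \<le> \<bar>ln (G w) - ln (E w)\<bar>"
    using eventually_ge_at_top[of 0]
  proof eventually_elim
    case (elim P)
    show ?case
      using AE_gains_pos
      by eventually_elim (use abs_ln_one_plus_mult_diff_le elim in fastforce)
  qed
qed (use integrable_ln_diff in auto)

theorem tendsto_SUP_positive_part_rate:
  "((\<lambda>P. SUP p \<in> power_allocations P.
      \<integral>w. max 0 (ln (1 + G w * p (G w)) - ln (1 + E w * p (G w))) \<partial>M)
    \<longlongrightarrow> (\<integral>w. max 0 (ln (G w / E w)) \<partial>M)) at_top"
proof (rule tendsto_SUP_squeeze)
  show "\<forall>\<^sub>F P in at_top. (\<lambda>_. P) \<in> power_allocations P"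
    using eventually_ge_at_top[of 0] by eventually_elim (auto intro: bounded_in_power_allocations)
qed (use positive_part_rate_le tendsto_constant_power_positive_part_rate in auto)

lemma integral_bounded_mult_centered_ln_E:
  assumes "\<phi> \<in> borel_measurable borel" "\<And>g. \<bar>\<phi> g\<bar> \<le> B"
  shows "integrable M (\<lambda>w. \<phi> (G w) * (ln (E w) - mean_ln_E))"
    and "(\<integral>w. \<phi> (G w) * (ln (E w) - mean_ln_E) \<partial>M) = 0"
proof -
  have "indep_var borel G borel (\<lambda>w. ln (E w) - mean_ln_E)"
    using indep_var_compose[OF indep_gains, of "\<lambda>x. x" borel "\<lambda>x. ln x - mean_ln_E" borel]
    by (simp add: comp_def)
  moreover have "integrable M (\<lambda>w. ln (E w) - mean_ln_E)"
    "expectation (\<lambda>w. ln (E w) - mean_ln_E) = 0"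
    using integrable_ln_E by (auto simp: prob_space mean_ln_E_def)
  ultimately show "integrable M (\<lambda>w. \<phi> (G w) * (ln (E w) - mean_ln_E))"
    "(\<integral>w. \<phi> (G w) * (ln (E w) - mean_ln_E) \<partial>M) = 0"
    using indep_var_integral_bounded_mult[of G "\<lambda>w. ln (E w) - mean_ln_E" \<phi> B] assms by auto
qed

lemma integrable_threshold_centered_ln_G:
  "integrable M (\<lambda>w. indicator {T..} (G w) * (ln (G w) - mean_ln_E))"
proof (rule Bochner_Integration.integrable_bound)
  show "integrable M (\<lambda>w. ln (G w) - mean_ln_E)"
    using integrable_ln_G by simp
  show "AE w in M. norm (indicator {T..} (G w) * (ln (G w) - mean_ln_E))
      \<le> norm (ln (G w) - mean_ln_E)"
    by (intro AE_I2) (simp add: indicator_def)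
qed measurable

lemma integrable_positive_part_centered_ln_G:
  "integrable M (\<lambda>w. max 0 (ln (G w) - mean_ln_E))"
proof (rule Bochner_Integration.integrable_bound)
  show "integrable M (\<lambda>w. ln (G w) - mean_ln_E)"
    using integrable_ln_G by simp
qed auto

lemma integral_threshold_ln_div:
  "(\<integral>w. indicator {T..} (G w) * ln (G w / E w) \<partial>M)
    = (\<integral>w. indicator {T..} (G w) * (ln (G w) - mean_ln_E) \<partial>M)"
proof -
  let ?I = "\<lambda>w. indicator {T..} (G w) :: real"
  note centered = integral_bounded_mult_centered_ln_E[of "indicator {T..}" 1]
  have "(\<integral>w. ?I w * ln (G w / E w) \<partial>M)
      = (\<integral>w. ?I w * (ln (G w) - mean_ln_E) - ?I w * (ln (E w) - mean_ln_E) \<partial>M)"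
  proof (rule integral_cong_AE)
    show "AE w in M. ?I w * ln (G w / E w)
        = ?I w * (ln (G w) - mean_ln_E) - ?I w * (ln (E w) - mean_ln_E)"
      using AE_ln_div_eq by eventually_elim (simp add: right_diff_distrib)
  qed auto
  also have "\<dots> = (\<integral>w. ?I w * (ln (G w) - mean_ln_E) \<partial>M)"
    using Bochner_Integration.integral_diff[OF integrable_threshold_centered_ln_G centered(1)]
      centered(2)
    by simp
  finally show ?thesis .
qed

lemma integral_threshold_le_positive_part:
  "(\<integral>w. indicator {T..} (G w) * (ln (G w) - mean_ln_E) \<partial>M)
    \<le> (\<integral>w. max 0 (ln (G w) - mean_ln_E) \<partial>M)"
  using integrable_threshold_centered_ln_G integrable_positive_part_centered_ln_G
  by (rule integral_mono) (simp add: indicator_def)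

lemma integral_threshold_exp_mean_eq_positive_part:
  "(\<integral>w. indicator {exp mean_ln_E..} (G w) * (ln (G w) - mean_ln_E) \<partial>M)
    = (\<integral>w. max 0 (ln (G w) - mean_ln_E) \<partial>M)"
proof (rule integral_cong_AE)
  show "AE w in M. indicator {exp mean_ln_E..} (G w) * (ln (G w) - mean_ln_E)
      = max 0 (ln (G w) - mean_ln_E)"
    using AE_gains_pos
  proof eventually_elim
    case (elim w)
    then have "exp mean_ln_E \<le> G w \<longleftrightarrow> mean_ln_E \<le> ln (G w)" by (simp add: ln_ge_iff)
    then show ?case by (auto simp: indicator_def)
  qed
qed auto

lemma SUP_threshold_cond_exp_event:
  "(SUP T \<in> {0..}. measure M {w \<in> space M. T \<le> G w} *
      cond_exp_event M (\<lambda>w. ln (G w / E w)) {w \<in> space M. T \<le> G w})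
    = (\<integral>w. max 0 (ln (G w) - mean_ln_E) \<partial>M)"
proof -
  have threshold: "measure M {w \<in> space M. T \<le> G w} *
      cond_exp_event M (\<lambda>w. ln (G w / E w)) {w \<in> space M. T \<le> G w}
    = (\<integral>w. indicator {T..} (G w) * (ln (G w) - mean_ln_E) \<partial>M)" for T
  proof -
    have "measure M {w \<in> space M. T \<le> G w} *
        cond_exp_event M (\<lambda>w. ln (G w / E w)) {w \<in> space M. T \<le> G w}
      = (\<integral>w. indicator {w \<in> space M. T \<le> G w} w * ln (G w / E w) \<partial>M)"
      by (rule measure_mult_cond_exp_event) measurable
    also have "\<dots> = (\<integral>w. indicator {T..} (G w) * ln (G w / E w) \<partial>M)"
      by (intro Bochner_Integration.integral_cong) (auto simp: indicator_def)
    finally show ?thesis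
      by (simp only: integral_threshold_ln_div)
  qed
  show ?thesis
    unfolding threshold
    by (rule cSup_eq_maximum)
      (auto intro!: image_eqI[of _ _ "exp mean_ln_E"] integral_threshold_le_positive_part
        integral_threshold_exp_mean_eq_positive_part[symmetric])
qed

lemma rate_le_positive_part_centered_ln_G:
  assumes p: "p \<in> power_allocations P"
  shows "(\<integral>w. ln (1 + G w * p (G w)) - ln (1 + E w * p (G w)) \<partial>M)
    \<le> (\<integral>w. max 0 (ln (G w) - mean_ln_E) \<partial>M)"
proof (cases "integrable M (\<lambda>w. ln (1 + G w * p (G w)) - ln (1 + E w * p (G w)))")
  case False
  then show ?thesis by (simp add: not_integrable_integral_eq)
next
  case True
  \<comment> \<open>slope of the tangent of \<open>t \<mapsto> ln (1 + exp t * p g)\<close> at \<open>t = mean_ln_E\<close>\<close>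
  define \<phi> where "\<phi> g = exp mean_ln_E * p g / (1 + exp mean_ln_E * p g)" for g
  have p_nonneg: "0 \<le> p g" for g using power_allocations_nonneg[OF p] .
  have "p \<in> borel_measurable borel" using p by (simp add: power_allocations_def)
  then have \<phi>_measurable: "\<phi> \<in> borel_measurable borel" unfolding \<phi>_def by measurable
  have \<phi>_bound: "\<bar>\<phi> g\<bar> \<le> 1" for g
  proof -
    have "0 \<le> exp mean_ln_E * p g" using p_nonneg[of g] by simp
    then show ?thesis by (simp add: \<phi>_def divide_le_eq_1)
  qed
  note centered = integral_bounded_mult_centered_ln_E[OF \<phi>_measurable \<phi>_bound]
  have "(\<integral>w. ln (1 + G w * p (G w)) - ln (1 + E w * p (G w)) \<partial>M)
      \<le> (\<integral>w. max 0 (ln (G w) - mean_ln_E) - \<phi> (G w) * (ln (E w) - mean_ln_E) \<partial>M)"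
  proof (rule integral_mono_AE[OF True])
    show "integrable M (\<lambda>w. max 0 (ln (G w) - mean_ln_E) - \<phi> (G w) * (ln (E w) - mean_ln_E))"
      using integrable_positive_part_centered_ln_G centered(1)
      by (rule Bochner_Integration.integrable_diff)
    show "AE w in M. ln (1 + G w * p (G w)) - ln (1 + E w * p (G w))
        \<le> max 0 (ln (G w) - mean_ln_E) - \<phi> (G w) * (ln (E w) - mean_ln_E)"
      using AE_gains_pos unfolding \<phi>_def
      by eventually_elim (intro ln_one_plus_mult_diff_le_tangent p_nonneg; simp)
  qed
  also have "\<dots> = (\<integral>w. max 0 (ln (G w) - mean_ln_E) \<partial>M)"
    using Bochner_Integration.integral_diff[OF integrable_positive_part_centered_ln_G centered(1)]
      centered(2)
    by simp
  finally show ?thesis .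
qed

lemma tendsto_threshold_power_rate:
  "((\<lambda>P. \<integral>w. ln (1 + G w * (P * indicator {T..} (G w)))
        - ln (1 + E w * (P * indicator {T..} (G w))) \<partial>M)
    \<longlongrightarrow> (\<integral>w. indicator {T..} (G w) * ln (G w / E w) \<partial>M)) at_top"
proof (rule integral_dominated_convergence_at_top[where w="\<lambda>w. \<bar>ln (G w) - ln (E w)\<bar>"])
  show "AE w in M. ((\<lambda>P. ln (1 + G w * (P * indicator {T..} (G w)))
        - ln (1 + E w * (P * indicator {T..} (G w))))
      \<longlongrightarrow> indicator {T..} (G w) * ln (G w / E w)) at_top"
    using AE_gains_pos AE_ln_div_eq
    by eventually_elim (auto simp: indicator_def intro!: tendsto_ln_one_plus_mult_diff)
  show "\<forall>\<^sub>F P in at_top. AE w in M.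
      norm (ln (1 + G w * (P * indicator {T..} (G w))) - ln (1 + E w * (P * indicator {T..} (G w))))
      \<le> \<bar>ln (G w) - ln (E w)\<bar>"
    using eventually_ge_at_top[of 0]
  proof eventually_elim
    case (elim P)
    show ?case
      using AE_gains_pos
      by eventually_elim (use abs_ln_one_plus_mult_diff_le elim in \<open>simp add: indicator_def\<close>)
  qed
qed (use integrable_ln_diff in auto)

theorem tendsto_SUP_rate:
  "((\<lambda>P. SUP p \<in> power_allocations P.
      \<integral>w. ln (1 + G w * p (G w)) - ln (1 + E w * p (G w)) \<partial>M)
    \<longlongrightarrow> (\<integral>w. max 0 (ln (G w) - mean_ln_E) \<partial>M)) at_top"
proof (rule tendsto_SUP_squeeze)
  show "\<forall>\<^sub>F P in at_top. (\<lambda>g. P * indicator {exp mean_ln_E..} g) \<in> power_allocations P"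
    using eventually_ge_at_top[of 0]
    by eventually_elim (auto intro!: bounded_in_power_allocations simp: indicator_def)
  show "((\<lambda>P. \<integral>w. ln (1 + G w * (P * indicator {exp mean_ln_E..} (G w)))
        - ln (1 + E w * (P * indicator {exp mean_ln_E..} (G w))) \<partial>M)
      \<longlongrightarrow> (\<integral>w. max 0 (ln (G w) - mean_ln_E) \<partial>M)) at_top"
    using tendsto_threshold_power_rate[of "exp mean_ln_E"]
    by (simp only: integral_threshold_ln_div integral_threshold_exp_mean_eq_positive_part)
qed (rule rate_le_positive_part_centered_ln_G)

end

section \<open>The strongest of K Gaussian channels\<close>

lemma Gmax_measurable:
  assumes "\<And>i. i < K \<Longrightarrow> H i \<in> borel_measurable M"
  shows "(\<lambda>w. Gmax K H w) \<in> borel_measurable M"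
  unfolding Gmax_def using assms by (intro borel_measurable_Max) auto

lemma Gmax_ge: "i < K \<Longrightarrow> (cmod (H i w))\<^sup>2 \<le> Gmax K H w"
  unfolding Gmax_def by (intro Max_ge) auto

lemma Gmax_attained: "0 < K \<Longrightarrow> \<exists>i<K. Gmax K H w = (cmod (H i w))\<^sup>2"
proof -
  assume "0 < K"
  then have "Gmax K H w \<in> (\<lambda>i. (cmod (H i w))\<^sup>2) ` {..<K}"
    unfolding Gmax_def by (intro Max_in) auto
  then show ?thesis by auto
qed

lemma integrable_ln_Gmax:
  assumes "0 < K" and H_measurable: "\<And>i. i < K \<Longrightarrow> H i \<in> borel_measurable M"
    and ln_integrable: "\<And>i. i < K \<Longrightarrow> integrable M (\<lambda>w. ln ((cmod (H i w))\<^sup>2))"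
  shows "integrable M (\<lambda>w. ln (Gmax K H w))"
proof (rule Bochner_Integration.integrable_bound)
  show "integrable M (\<lambda>w. \<Sum>i<K. \<bar>ln ((cmod (H i w))\<^sup>2)\<bar>)"
    using ln_integrable by (intro Bochner_Integration.integrable_sum integrable_abs) auto
  show "(\<lambda>w. ln (Gmax K H w)) \<in> borel_measurable M"
    using Gmax_measurable[OF H_measurable] by measurable
  show "AE w in M. norm (ln (Gmax K H w)) \<le> norm (\<Sum>i<K. \<bar>ln ((cmod (H i w))\<^sup>2)\<bar>)"
  proof (rule AE_I2)
    fix w
    obtain j where j: "j < K" "Gmax K H w = (cmod (H j w))\<^sup>2"
      using Gmax_attained[OF \<open>0 < K\<close>, where H=H and w=w] by blast
    have "\<bar>ln (Gmax K H w)\<bar> \<le> (\<Sum>i<K. \<bar>ln ((cmod (H i w))\<^sup>2)\<bar>)"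
      unfolding j(2) using j(1)
      by (intro member_le_sum[where f="\<lambda>i. \<bar>ln ((cmod (H i w))\<^sup>2)\<bar>"]) auto
    then show "norm (ln (Gmax K H w)) \<le> norm (\<Sum>i<K. \<bar>ln ((cmod (H i w))\<^sup>2)\<bar>)"
      by (simp add: sum_nonneg)
  qed
qed

lemma AE_Gmax_pos:
  assumes "i < K" "AE w in M. H i w \<noteq> 0"
  shows "AE w in M. 0 < Gmax K H w"
  using assms(2)
proof eventually_elim
  case (elim w)
  then have "0 < (cmod (H i w))\<^sup>2" by simp
  then show ?case using Gmax_ge[OF assms(1)] by (rule less_le_trans)
qed

lemma (in prob_space) indep_var_Gmax_cmod_square:
  assumes "indep_vars (\<lambda>_. borel)
    (\<lambda>j. case j of None \<Rightarrow> He | Some i \<Rightarrow> H i) (insert None (Some ` {..<K}))"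
  shows "indep_var borel (\<lambda>w. Gmax K H w) borel (\<lambda>w. (cmod (He w))\<^sup>2)"
proof -
  define Y where "Y j w = (cmod ((case j of None \<Rightarrow> He | Some i \<Rightarrow> H i) w))\<^sup>2" for j w
  have "indep_vars (\<lambda>_. borel) Y (insert None (Some ` {..<K}))"
    unfolding Y_def by (rule indep_vars_compose2[OF assms]) auto
  then have "indep_var (PiM (Some ` {..<K}) (\<lambda>_. borel)) (\<lambda>w. restrict (\<lambda>j. Y j w) (Some ` {..<K}))
      (PiM {None} (\<lambda>_. borel)) (\<lambda>w. restrict (\<lambda>j. Y j w) {None})"
    by (rule indep_var_restrict) auto
  then have "indep_var
      borel ((\<lambda>f. Max (f ` Some ` {..<K})) \<circ> (\<lambda>w. restrict (\<lambda>j. Y j w) (Some ` {..<K})))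
      borel ((\<lambda>f. f None) \<circ> (\<lambda>w. restrict (\<lambda>j. Y j w) {None}))"
    by (rule indep_var_compose) (auto intro!: borel_measurable_Max)
  moreover have "Max ((\<lambda>j. Y j w) ` Some ` {..<K}) = Gmax K H w" for w
    unfolding Gmax_def image_image Y_def by simp
  ultimately show ?thesis
    by (simp add: comp_def Y_def)
qed

lemma fading_gains_Gmax_cn:
  assumes "prob_space M" and "0 < K"
    and "\<And>i. i < K \<Longrightarrow> 0 < mu i" and "0 < mu_e"
    and H: "\<And>i. i < K \<Longrightarrow> distributed M lborel (H i) (\<lambda>z. ennreal (cn_density (mu i) z))"
    and He: "distributed M lborel He (\<lambda>z. ennreal (cn_density mu_e z))"
    and "prob_space.indep_vars M (\<lambda>_. borel)
           (\<lambda>j. case j of None \<Rightarrow> He | Some i \<Rightarrow> H i) (insert None (Some ` {..<K}))"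
  shows "fading_gains M (Gmax K H) (\<lambda>w. (cmod (He w))\<^sup>2)"
proof -
  interpret prob_space M by fact
  have H_measurable: "H i \<in> borel_measurable M" if "i < K" for i
    using distributed_measurable[OF H[OF that]] by simp
  have "AE w in M. 0 < Gmax K H w"
    using assms(2) by (intro AE_Gmax_pos[of 0] cn_distributed_AE_nonzero[OF assms(3) H]) auto
  moreover have "AE w in M. He w \<noteq> 0"
    by (rule cn_distributed_AE_nonzero[OF assms(4) He])
  ultimately have "AE w in M. 0 < Gmax K H w \<and> 0 < (cmod (He w))\<^sup>2"
    by eventually_elim simp
  moreover have "integrable M (\<lambda>w. ln (Gmax K H w))"
    using assms(2) cn_distributed_integrable_ln_cmod_square[OF assms(3) H]
    by (intro integrable_ln_Gmax H_measurable) auto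
  ultimately show ?thesis
    using Gmax_measurable[OF H_measurable] distributed_measurable[OF He]
      cn_distributed_integrable_ln_cmod_square[OF assms(4) He]
      indep_var_Gmax_cmod_square[OF assms(7)]
    by unfold_locales auto
qed

theorem corollary3:
  fixes M :: "'a measure" and K :: nat and mu :: "nat \<Rightarrow> real" and mu_e :: real
    and H :: "nat \<Rightarrow> 'a \<Rightarrow> complex" and He :: "'a \<Rightarrow> complex"
  assumes "prob_space M"
    and "K \<ge> 1"
    and "\<And>i. i < K \<Longrightarrow> mu i > 0" and "mu_e > 0"
    and "\<And>i. i < K \<Longrightarrow> distributed M lborel (H i) (\<lambda>z. ennreal (cn_density (mu i) z))"
    and "distributed M lborel He (\<lambda>z. ennreal (cn_density mu_e z))"
    and "prob_space.indep_vars M (\<lambda>_. borel)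
           (\<lambda>j. case j of None \<Rightarrow> He | Some i \<Rightarrow> H i) (insert None (Some ` {..<K}))"
  shows "((\<lambda>P. R_plus M K H He P) \<longlongrightarrow>
            (\<integral>w. max 0 (ln (Gmax K H w / (cmod (He w))\<^sup>2)) \<partial>M)) at_top \<and>
         ((\<lambda>P. R_minus M K H He P) \<longlongrightarrow>
            (SUP T \<in> {0..}. measure M {w \<in> space M. Gmax K H w \<ge> T} *
               cond_exp_event M (\<lambda>w. ln (Gmax K H w / (cmod (He w))\<^sup>2))
                 {w \<in> space M. Gmax K H w \<ge> T})) at_top"
proof -
  interpret fading_gains M "Gmax K H" "\<lambda>w. (cmod (He w))\<^sup>2"
    using assms(2) by (intro fading_gains_Gmax_cn[OF assms(1) _ assms(3-7)]) simp
  have "admissible_power M K H = power_allocations"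
    by (simp add: fun_eq_iff admissible_power_def power_allocations_def)
  then show ?thesis
    using tendsto_SUP_positive_part_rate tendsto_SUP_rate SUP_threshold_cond_exp_event
    by (simp add: R_plus_def R_minus_def)
qed

end
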